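(* Let $\epsilon,A\in\mathbb{R}$ with $\epsilon\neq0$, $A\neq 0$, and let $f:\mathbb{R}^4\to\mathbb{R}^4$ be $$f(x,y,z,w)=\Big(y,\,z,\,w,\,-x-\tfrac{1}{A}y+\tfrac{2}{A}z-\tfrac{1}{\epsilon A}z^3-\tfrac{1}{A}w\Big).$$ Then the non-wandering set of $f$ is contained in the cube $[-R,R]^4$, where $R=\sqrt{|\epsilon A|\big(2+\tfrac{4}{|A|}\big)}$.
   Context: The non-wandering set of $f$ is the set of points $q$ such that for every neighbourhood $U$ of $q$ there is $k\geq1$ with $f^k(U)\cap U\neq\emptyset$. *)

theory Defs
  imports "HOL-Analysis.Analysis"
begin

definition nonwandering_set :: "('a::topological_space \<Rightarrow> 'a) \<Rightarrow> 'a set" where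
  "nonwandering_set f = {q. \<forall>U. open U \<and> q \<in> U \<longrightarrow>
      (\<exists>k\<ge>1. (f ^^ k) ` U \<inter> U \<noteq> {})}"

definition f4 :: "real \<Rightarrow> real \<Rightarrow> real \<times> real \<times> real \<times> real \<Rightarrow> real \<times> real \<times> real \<times> real" where
  "f4 \<epsilon> A = (\<lambda>(x, y, z, w). (y, z, w,
      - x - (1/A) * y + (2/A) * z - (1/(\<epsilon> * A)) * z ^ 3 - (1/A) * w))"

end

theory Submission
  imports Defs
begin

(* Along an orbit the first coordinates u satisfy the fourth-order recurrence
   A (u(n) + u(n+4)) + u(n+1) + u(n+3) = u(n+2) (2 - u(n+2)^2 / eps).
   If |u(n+2)| bounds its four neighbours and exceeds R, the cubic right-hand side
   outgrows the linear left-hand side, so a finite orbit segment cannot have an interior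
   maximum larger than R. A point q outside the cube returns close to itself along a
   segment of an orbit; the maximum of that segment is either interior, or it lies at
   one end and is then repeated, up to a small error, in the interior. Either way the
   segment has an almost maximal interior value of size about max |q_i| > R, which is
   impossible once the neighbourhood is small enough. *)

definition orbit_seq :: "real \<Rightarrow> real \<Rightarrow> real \<times> real \<times> real \<times> real \<Rightarrow> nat \<Rightarrow> real" where
  "orbit_seq \<epsilon> A p n = fst ((f4 \<epsilon> A ^^ n) p)"

lemma f4_apply:
  "f4 \<epsilon> A (x, y, z, w) =
     (y, z, w, - x - (1/A) * y + (2/A) * z - (1/(\<epsilon> * A)) * z ^ 3 - (1/A) * w)"
  by (simp add: f4_def)

lemma f4_iterate:
  "(f4 \<epsilon> A ^^ n) p =
     (orbit_seq \<epsilon> A p n, orbit_seq \<epsilon> A p (n + 1), orbit_seq \<epsilon> A p (n + 2), orbit_seq \<epsilon> A p (n + 3))"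
proof -
  obtain x y z w where "(f4 \<epsilon> A ^^ n) p = (x, y, z, w)"
    by (cases "(f4 \<epsilon> A ^^ n) p") auto
  then show ?thesis
    by (simp add: orbit_seq_def f4_apply eval_nat_numeral)
qed

lemma orbit_seq_recurrence:
  fixes \<epsilon> A :: real and p :: "real \<times> real \<times> real \<times> real"
  assumes "A \<noteq> 0"
  defines "u \<equiv> orbit_seq \<epsilon> A p"
  shows "A * (u n + u (n + 4)) + u (n + 1) + u (n + 3) = u (n + 2) * (2 - u (n + 2) ^ 2 / \<epsilon>)"
proof -
  have "(f4 \<epsilon> A ^^ Suc n) p = f4 \<epsilon> A ((f4 \<epsilon> A ^^ n) p)" by simp
  then have "(u (Suc n), u (Suc n + 1), u (Suc n + 2), u (Suc n + 3)) =
      f4 \<epsilon> A (u n, u (n + 1), u (n + 2), u (n + 3))"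
    by (simp only: f4_iterate u_def)
  then have u4: "u (n + 4) = - u n - (1/A) * u (n + 1) + (2/A) * u (n + 2)
               - (1/(\<epsilon> * A)) * u (n + 2) ^ 3 - (1/A) * u (n + 3)"
    by (simp add: f4_apply eval_nat_numeral)
  show ?thesis
    using assms(1) by (simp add: u4 field_simps power2_eq_square power3_eq_cube)
qed

lemma orbit_seq_dist:
  assumes "i < 4"
  shows "\<bar>orbit_seq \<epsilon> A p (m + i) - orbit_seq \<epsilon> A p' (m' + i)\<bar>
           \<le> dist ((f4 \<epsilon> A ^^ m) p) ((f4 \<epsilon> A ^^ m') p')"
proof -
  have "\<bar>a - a'\<bar> \<le> dist (a, b, c, d) (a', b', c', d') \<and> \<bar>b - b'\<bar> \<le> dist (a, b, c, d) (a', b', c', d')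
      \<and> \<bar>c - c'\<bar> \<le> dist (a, b, c, d) (a', b', c', d') \<and> \<bar>d - d'\<bar> \<le> dist (a, b, c, d) (a', b', c', d')"
    for a b c d a' b' c' d' :: real
    using dist_fst_le[of "(a, b, c, d)" "(a', b', c', d')"] dist_snd_le[of "(a, b, c, d)" "(a', b', c', d')"]
      dist_fst_le[of "(b, c, d)" "(b', c', d')"] dist_snd_le[of "(b, c, d)" "(b', c', d')"]
      dist_fst_le[of "(c, d)" "(c', d')"] dist_snd_le[of "(c, d)" "(c', d')"]
    by (simp add: dist_real_def)
  moreover have "i = 0 \<or> i = 1 \<or> i = 2 \<or> i = 3"
    using assms by auto
  ultimately show ?thesis
    unfolding f4_iterate[where n = m] f4_iterate[where n = m'] by auto
qed

lemma recurrence_interior_bound: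
  fixes a b c d e \<epsilon> A M :: real
  assumes "A * (a + e) + b + d = c * (2 - c ^ 2 / \<epsilon>)"
    and "\<bar>a\<bar> \<le> M" "\<bar>b\<bar> \<le> M" "\<bar>d\<bar> \<le> M" "\<bar>e\<bar> \<le> M"
  shows "\<bar>c\<bar> * (c ^ 2 / \<bar>\<epsilon>\<bar> - 2) \<le> (2 * \<bar>A\<bar> + 2) * M"
proof -
  have "c ^ 2 / \<bar>\<epsilon>\<bar> - 2 \<le> \<bar>2 - c ^ 2 / \<epsilon>\<bar>"
    by (cases "\<epsilon> < 0") (auto simp: abs_if)
  then have "\<bar>c\<bar> * (c ^ 2 / \<bar>\<epsilon>\<bar> - 2) \<le> \<bar>c * (2 - c ^ 2 / \<epsilon>)\<bar>"
    by (simp add: abs_mult mult_left_mono)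
  also have "\<dots> = \<bar>A * (a + e) + b + d\<bar>"
    using assms(1) by simp
  also have "\<dots> \<le> \<bar>A * (a + e)\<bar> + \<bar>b\<bar> + \<bar>d\<bar>"
    using abs_triangle_ineq[of "A * (a + e) + b" d] abs_triangle_ineq[of "A * (a + e)" b] by linarith
  also have "\<dots> \<le> \<bar>A\<bar> * (\<bar>a\<bar> + \<bar>e\<bar>) + \<bar>b\<bar> + \<bar>d\<bar>"
    using mult_left_mono[OF abs_triangle_ineq[of a e], of "\<bar>A\<bar>"] by (simp add: abs_mult)
  also have "\<dots> \<le> \<bar>A\<bar> * (M + M) + M + M"
    using assms(2-5) by (intro add_mono mult_left_mono) auto
  finally show ?thesis
    by (simp add: algebra_simps)
qed

text \<open>For k = 1 a value at an end of the segment needs two shifts by k to reach the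
  interior, hence the error 2d.\<close>
lemma near_return_interior_index:
  fixes u :: "nat \<Rightarrow> real"
  assumes "k \<ge> 1" and close: "\<And>i. i < 4 \<Longrightarrow> \<bar>u i - u (k + i)\<bar> < d" and "N \<le> k + 3"
  obtains j where "2 \<le> j" "j \<le> k + 1" "\<bar>u j - u N\<bar> < 2 * d"
proof -
  have d0: "d > 0"
    using close[of 0] by linarith
  consider "2 \<le> N" "N \<le> k + 1" | "N \<le> 1" "k \<ge> 2 \<or> N = 1" | "N = 0" "k = 1"
    | "k + 2 \<le> N" "k \<ge> 2 \<or> N = 3" | "N = 4" "k = 1"
    using assms(1,3) by linarith
  then show ?thesis
  proof cases
    case 1
    then show ?thesis using d0 that by auto
  next
    case 2
    then show ?thesis
      using close[of N] that[of "k + N"] assms(1) d0 by (auto simp: abs_minus_commute)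
  next
    case 3
    then show ?thesis
      using close[of 0] close[of 1] that[of 2] by (auto simp: abs_less_iff numeral_2_eq_2)
  next
    case 4
    then have "N - k < 4" "2 \<le> N - k" "N - k \<le> k + 1" "k + (N - k) = N"
      using assms(1,3) by auto
    then show ?thesis
      using close[of "N - k"] that[of "N - k"] d0 by (auto simp: abs_minus_commute)
  next
    case 5
    then show ?thesis
      using close[of 2] close[of 3] that[of 2] by (auto simp: abs_less_iff eval_nat_numeral)
  qed
qed

lemma cubic_bound_downward_closed:
  fixes x y a b c :: real
  assumes "0 \<le> x" "x \<le> y" "0 \<le> c" "0 \<le> b" and "y * (y ^ 2 / c - a) \<le> b"
  shows "x * (x ^ 2 / c - a) \<le> b"
proof (cases "x ^ 2 / c - a \<le> 0")
  case True
  have "x * (x ^ 2 / c - a) \<le> 0"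
    by (rule mult_nonneg_nonpos[OF assms(1) True])
  then show ?thesis
    using assms(4) by linarith
next
  case False
  have "x ^ 2 / c - a \<le> y ^ 2 / c - a"
    using assms(1-3) by (simp add: divide_right_mono power_mono)
  then have "x * (x ^ 2 / c - a) \<le> y * (y ^ 2 / c - a)"
    using False assms(1,2) by (intro mult_mono) auto
  then show ?thesis
    using assms(5) by linarith
qed

lemma recurrence_near_return_bound:
  fixes u :: "nat \<Rightarrow> real" and A \<epsilon> \<delta> M :: real
  defines "K \<equiv> 2 * \<bar>A\<bar> + 2"
  assumes rec: "\<And>n. A * (u n + u (n + 4)) + u (n + 1) + u (n + 3) = u (n + 2) * (2 - u (n + 2) ^ 2 / \<epsilon>)"
    and "k \<ge> 1" and close: "\<And>i. i < 4 \<Longrightarrow> \<bar>u i - u (k + i)\<bar> < 2 * \<delta>"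
    and "i < 4" "M - \<delta> \<le> \<bar>u i\<bar>" "0 \<le> M - 5 * \<delta>"
  shows "(M - 5 * \<delta>) * ((M - 5 * \<delta>) ^ 2 / \<bar>\<epsilon>\<bar> - 2 - K) \<le> 4 * K * \<delta>"
proof -
  define Mp where "Mp = Max ((\<lambda>n. \<bar>u n\<bar>) ` {..k + 3})"
  have Mp_ge: "\<bar>u n\<bar> \<le> Mp" if "n \<le> k + 3" for n
    unfolding Mp_def using that by (intro Max_ge) auto
  have "Mp \<in> (\<lambda>n. \<bar>u n\<bar>) ` {..k + 3}"
    unfolding Mp_def by (intro Max_in) auto
  then obtain N where "N \<le> k + 3" and N: "\<bar>u N\<bar> = Mp" by auto
  then obtain j where "2 \<le> j" "j \<le> k + 1" and j: "\<bar>u j - u N\<bar> < 4 * \<delta>"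
    using near_return_interior_index[where u = u and k = k and d = "2 * \<delta>", OF \<open>k \<ge> 1\<close> close] by auto
  define n where "n = j - 2"
  have jn: "j = n + 2" and "n + 4 \<le> k + 3"
    using \<open>2 \<le> j\<close> \<open>j \<le> k + 1\<close> unfolding n_def by auto
  define s where "s = \<bar>u j\<bar>"
  have "M - \<delta> \<le> Mp"
    using \<open>M - \<delta> \<le> \<bar>u i\<bar>\<close> Mp_ge[of i] \<open>i < 4\<close> by linarith
  have s_Mp: "Mp \<le> s + 4 * \<delta>" and s_M: "M - 5 * \<delta> \<le> s"
    using j N \<open>M - \<delta> \<le> Mp\<close> unfolding s_def by linarith+
  have "s * (s ^ 2 / \<bar>\<epsilon>\<bar> - 2) \<le> K * Mp"
    using recurrence_interior_bound[OF rec, of n Mp] \<open>n + 4 \<le> k + 3\<close>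
      Mp_ge[of n] Mp_ge[of "n + 1"] Mp_ge[of "n + 3"] Mp_ge[of "n + 4"]
    unfolding s_def K_def jn by simp
  also have "\<dots> \<le> K * (s + 4 * \<delta>)"
    using s_Mp unfolding K_def by (intro mult_left_mono) auto
  finally have "s * (s ^ 2 / \<bar>\<epsilon>\<bar> - 2 - K) \<le> 4 * K * \<delta>"
    by (simp add: algebra_simps)
  moreover have "0 < \<delta>"
    using close[of 0] by linarith
  ultimately show ?thesis
    using cubic_bound_downward_closed[where x = "M - 5 * \<delta>" and y = s and a = "2 + K" and c = "\<bar>\<epsilon>\<bar>"]
      s_M \<open>0 \<le> M - 5 * \<delta>\<close>
    unfolding K_def by (simp add: diff_diff_eq)
qed

lemma nonwandering_set_return:
  fixes f :: "'a::metric_space \<Rightarrow> 'a"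
  assumes "q \<in> nonwandering_set f" "0 < \<delta>"
  obtains k p where "k \<ge> 1" "dist p q < \<delta>" "dist ((f ^^ k) p) q < \<delta>"
  using assms unfolding nonwandering_set_def
  by (auto dest!: spec[of _ "ball q \<delta>"] simp: dist_commute)

lemma nonwandering_orbit_seq_bound:
  fixes \<epsilon> A :: real
  assumes "\<epsilon> \<noteq> 0" "A \<noteq> 0" and q: "q \<in> nonwandering_set (f4 \<epsilon> A)" and "i < 4"
  shows "(orbit_seq \<epsilon> A q i) ^ 2 \<le> \<bar>\<epsilon>\<bar> * (2 * \<bar>A\<bar> + 4)"
proof (rule ccontr)
  define M where "M = \<bar>orbit_seq \<epsilon> A q i\<bar>"
  define K where "K = 2 * \<bar>A\<bar> + 2"
  define gap where "gap \<delta> = (M - 5 * \<delta>) * ((M - 5 * \<delta>) ^ 2 / \<bar>\<epsilon>\<bar> - 2 - K) - 4 * K * \<delta>" for \<delta>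
  assume "\<not> ?thesis"
  then have "K + 2 < M ^ 2 / \<bar>\<epsilon>\<bar>" and "0 < M"
    using assms(1) by (auto simp: M_def K_def field_simps)
  then have "0 < gap 0"
    using assms(1) by (simp add: gap_def)
  moreover have "(gap \<longlongrightarrow> gap 0) (at_right 0)"
    unfolding gap_def using assms(1) by (intro tendsto_intros) auto
  ultimately have "\<forall>\<^sub>F \<delta> in at_right 0. 0 < gap \<delta>"
    by (rule order_tendstoD(1)[rotated])
  moreover have "\<forall>\<^sub>F \<delta> in at_right 0. 0 < \<delta> \<and> 5 * \<delta> < M"
    using \<open>0 < M\<close> by (auto simp: eventually_at_right_field intro!: exI[of _ "M / 5"])
  ultimately have "\<forall>\<^sub>F \<delta> in at_right 0. 0 < gap \<delta> \<and> 0 < \<delta> \<and> 5 * \<delta> < M"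
    by (rule eventually_conj)
  then obtain \<delta> where "0 < gap \<delta>" "0 < \<delta>" "5 * \<delta> < M"
    using eventually_happens'[OF trivial_limit_at_right_real] by blast
  then obtain k p where "k \<ge> 1" and p: "dist p q < \<delta>" and fp: "dist ((f4 \<epsilon> A ^^ k) p) q < \<delta>"
    using nonwandering_set_return[OF q] by blast
  define u where "u = orbit_seq \<epsilon> A p"
  have rec: "A * (u n + u (n + 4)) + u (n + 1) + u (n + 3) = u (n + 2) * (2 - u (n + 2) ^ 2 / \<epsilon>)"
    for n
    unfolding u_def by (rule orbit_seq_recurrence[OF assms(2)])
  have near: "\<bar>u j - orbit_seq \<epsilon> A q j\<bar> < \<delta>" "\<bar>u (k + j) - orbit_seq \<epsilon> A q j\<bar> < \<delta>"
    if "j < 4" for j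
    using orbit_seq_dist[OF that, of \<epsilon> A p 0 q 0] orbit_seq_dist[OF that, of \<epsilon> A p k q 0] p fp
    unfolding u_def by auto
  then have "\<bar>u j - u (k + j)\<bar> < 2 * \<delta>" if "j < 4" for j
    using that by (fastforce simp: abs_less_iff)
  moreover have "M - \<delta> \<le> \<bar>u i\<bar>"
    using near(1)[OF \<open>i < 4\<close>] unfolding M_def by (auto simp: abs_less_iff abs_if split: if_splits)
  ultimately have "(M - 5 * \<delta>) * ((M - 5 * \<delta>) ^ 2 / \<bar>\<epsilon>\<bar> - 2 - K) \<le> 4 * K * \<delta>"
    unfolding K_def using \<open>5 * \<delta> < M\<close>
    by (intro recurrence_near_return_bound[OF rec \<open>k \<ge> 1\<close> _ \<open>i < 4\<close>]) auto
  then show False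
    using \<open>0 < gap \<delta>\<close> by (simp add: gap_def)
qed

theorem proposition2:
  fixes \<epsilon> A :: real
  assumes "\<epsilon> \<noteq> 0" and "A \<noteq> 0"
  defines "R \<equiv> sqrt (\<bar>\<epsilon> * A\<bar> * (2 + 4 / \<bar>A\<bar>))"
  shows "nonwandering_set (f4 \<epsilon> A) \<subseteq>
           {-R..R} \<times> {-R..R} \<times> {-R..R} \<times> {-R..R}"
proof
  fix q assume "q \<in> nonwandering_set (f4 \<epsilon> A)"
  moreover have "\<bar>\<epsilon> * A\<bar> * (2 + 4 / \<bar>A\<bar>) = \<bar>\<epsilon>\<bar> * (2 * \<bar>A\<bar> + 4)"
    using assms(2) by (simp add: abs_mult field_simps)
  ultimately have bound: "\<bar>orbit_seq \<epsilon> A q i\<bar> \<le> R" if "i < 4" for i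
    using nonwandering_orbit_seq_bound[OF assms(1,2) _ that] unfolding R_def
    by (metis real_le_rsqrt power2_abs)
  have "q = (orbit_seq \<epsilon> A q 0, orbit_seq \<epsilon> A q 1, orbit_seq \<epsilon> A q 2, orbit_seq \<epsilon> A q 3)"
    using f4_iterate[where n = 0 and p = q and \<epsilon> = \<epsilon> and A = A] by (simp add: numeral_2_eq_2)
  also have "\<dots> \<in> {-R..R} \<times> {-R..R} \<times> {-R..R} \<times> {-R..R}"
    using bound[of 0] bound[of 1] bound[of 2] bound[of 3] by (simp add: abs_le_iff)
  finally show "q \<in> {-R..R} \<times> {-R..R} \<times> {-R..R} \<times> {-R..R}" .
qed

end
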